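(* Let $\mathbf u$ be an infinite word whose language is closed under reversal, and suppose there exists an integer $H$ such that for every factor $f$ of $\mathbf u$ with $|f|\ge H$ the longest palindromic suffix of $f$ occurs exactly once in $f$. Let $w$ be a non-palindromic factor of $\mathbf u$ with $|w|\ge H$ and let $v$ be a palindromic factor of $\mathbf u$ with $|v|\ge H$. Then: (i) the occurrences of $w$ and $\overline w$ in $\mathbf u$ alternate, i.e., every complete return word of $w$ contains $\overline w$ as a factor; (ii) every factor $e$ of $\mathbf u$ which has prefix $w$ and suffix $\overline w$ and contains no other occurrences of $w$ or $\overline w$ is a palindrome; (iii) every complete return word of $v$ is a palindrome.
   Context: For a finite word $w$, $\overline{w}$ denotes its reversal; $w$ is a palindrome if $w=\overline w$. The language of $\mathbf u$ is closed under reversal if $\overline w$ is a factor of $\mathbf u$ whenever $w$ is (this implies every factor occurs infinitely often). A complete return word of a factor $w$ is a factor $q$ of $\mathbf u$ such that $w$ is a prefix and a suffix of $q$ and $w$ occurs in $q$ exactly twice. *)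

theory Defs
  imports Main "HOL-Library.Sublist"
begin

definition factor_of :: "(nat \<Rightarrow> 'a) \<Rightarrow> 'a list \<Rightarrow> bool" where
  "factor_of u w \<longleftrightarrow> (\<exists>i. w = map u [i..<i + length w])"

definition palindrome :: "'a list \<Rightarrow> bool" where
  "palindrome w \<longleftrightarrow> rev w = w"

definition closed_under_reversal :: "(nat \<Rightarrow> 'a) \<Rightarrow> bool" where
  "closed_under_reversal u \<longleftrightarrow> (\<forall>w. factor_of u w \<longrightarrow> factor_of u (rev w))"

definition occ :: "'a list \<Rightarrow> 'a list \<Rightarrow> nat" where
  "occ w f = card {j. j + length w \<le> length f \<and> take (length w) (drop j f) = w}"

text \<open>Longest palindromic suffix (the empty word is a palindrome, so it exists).\<close>
definition lps :: "'a list \<Rightarrow> 'a list" where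
  "lps f = drop (LEAST k. palindrome (drop k f)) f"

definition complete_return_word :: "(nat \<Rightarrow> 'a) \<Rightarrow> 'a list \<Rightarrow> 'a list \<Rightarrow> bool" where
  "complete_return_word u w q \<longleftrightarrow>
     factor_of u q \<and> prefix w q \<and> suffix w q \<and> occ w q = 2"

end

theory Submission
  imports Defs
begin

text \<open>In each part one looks at the longest palindromic suffix \<open>p\<close> of the factor \<open>q\<close>,
which by hypothesis occurs only once in \<open>q\<close>. If \<open>p\<close> is shorter than the word bordering
\<open>q\<close>, it is a suffix of that word and hence occurs twice in \<open>q\<close>. Otherwise \<open>p\<close> ends
with the border word and, being a palindrome, begins with its reversal. This either
exhibits \<open>rev w\<close> in \<open>q\<close> directly, or yields a further occurrence of the border word
unless \<open>p = q\<close>, in which case \<open>q\<close> is a palindrome.\<close>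

lemma card_le_occ:
  assumes "\<And>j. j \<in> J \<Longrightarrow> \<exists>a b. f = a @ x @ b \<and> length a = j"
  shows "card J \<le> occ x f"
  unfolding occ_def
proof (rule card_mono)
  show "finite {j. j + length x \<le> length f \<and> take (length x) (drop j f) = x}"
    by (rule finite_subset[of _ "{..length f}"]) auto
  show "J \<subseteq> {j. j + length x \<le> length f \<and> take (length x) (drop j f) = x}"
    using assms by force
qed

lemma two_le_occ:
  assumes "f = a @ x @ b" "f = c @ x @ d" "length a \<noteq> length c"
  shows "2 \<le> occ x f"
proof -
  have "card {length a, length c} \<le> occ x f"
    by (rule card_le_occ) (use assms(1,2) in blast)
  with assms(3) show ?thesis by simp
qed

lemma three_le_occ:
  assumes "f = a @ x @ b" "f = c @ x @ d" "f = g @ x @ h"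
    and "length a \<noteq> length c" "length a \<noteq> length g" "length c \<noteq> length g"
  shows "3 \<le> occ x f"
proof -
  have "card {length a, length c, length g} \<le> occ x f"
    by (rule card_le_occ) (use assms(1-3) in blast)
  with assms(4-6) show ?thesis by simp
qed

lemma occ_self [simp]: "occ x x = 1"
proof -
  have "{j. j + length x \<le> length x \<and> take (length x) (drop j x) = x} = {0}"
    by auto
  then show ?thesis unfolding occ_def by simp
qed

lemma palindrome_lps: "palindrome (lps f)"
  unfolding lps_def
  by (rule LeastI[where P = "\<lambda>k. palindrome (drop k f)" and k = "length f"])
    (simp add: palindrome_def)

lemma suffix_lps: "suffix (lps f) f"
  unfolding lps_def by (rule suffix_drop)

lemma length_le_lps:
  assumes "suffix s f" "palindrome s"
  shows "length s \<le> length (lps f)"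
proof -
  obtain c where c: "f = c @ s" using assms(1) by (auto simp: suffix_def)
  then have "palindrome (drop (length c) f)" using assms(2) by simp
  then have "(LEAST k. palindrome (drop k f)) \<le> length c" by (rule Least_le)
  then show ?thesis using c unfolding lps_def by simp
qed

lemma palindrome_suffix_imp_prefix_rev:
  assumes "palindrome p" "suffix s p"
  shows "prefix (rev s) p"
  using assms by (metis palindrome_def suffix_to_prefix)

lemma sublist_rev_if_return_word:
  assumes "prefix w q" "suffix w q" "occ w q = 2" "occ (lps q) q = 1"
  shows "sublist (rev w) q"
proof -
  define p where "p = lps q"
  have p: "palindrome p" "suffix p q" "occ p q = 1"
    using palindrome_lps suffix_lps assms(4) unfolding p_def by auto
  have "q \<noteq> w" using assms(3) by auto
  then have "length w < length q"
    using assms(1) prefix_length_le prefix_length_prefix by fastforce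
  show ?thesis
  proof (cases "length w \<le> length p")
    case True
    then have "suffix w p" using suffix_length_suffix[OF assms(2) p(2)] by simp
    then have "prefix (rev w) p" using palindrome_suffix_imp_prefix_rev p(1) by blast
    then show ?thesis using p(2) by (meson prefix_imp_sublist suffix_imp_sublist sublist_order.order.trans)
  next
    case False
    then have "suffix p w" using suffix_length_suffix[OF p(2) assms(2)] by simp
    then obtain a where a: "w = a @ p" by (auto simp: suffix_def)
    obtain c where c: "q = w @ c" using assms(1) by (auto simp: prefix_def)
    obtain d where d: "q = d @ p" using p(2) by (auto simp: suffix_def)
    \<comment> \<open>\<open>p\<close> occurs at the end of the prefix \<open>w\<close> and at the end of \<open>q\<close>\<close>
    have "2 \<le> occ p q"
      by (rule two_le_occ[of q a p c d "[]"])
        (use a c d \<open>length w < length q\<close> in \<open>auto dest: arg_cong[of _ _ length]\<close>)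
    with p(3) show ?thesis by simp
  qed
qed

lemma palindrome_if_bordered_by_reversal:
  assumes "prefix w e" "suffix (rev w) e" "occ w e = 1" "occ (lps e) e = 1"
  shows "palindrome e"
proof (cases "lps e = e")
  case True
  then show ?thesis using palindrome_lps by metis
next
  case False
  define p where "p = lps e"
  have p: "palindrome p" "suffix p e" "occ p e = 1"
    using palindrome_lps suffix_lps assms(4) unfolding p_def by auto
  obtain d where d: "e = d @ p" using p(2) by (auto simp: suffix_def)
  with False have "d \<noteq> []" unfolding p_def by auto
  obtain c where c: "e = w @ c" using assms(1) by (auto simp: prefix_def)
  show ?thesis
  proof (cases "length w \<le> length p")
    case True
    then have "suffix (rev w) p" using suffix_length_suffix[OF assms(2) p(2)] by simp
    then have "prefix w p" using palindrome_suffix_imp_prefix_rev[OF p(1)] by fastforce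
    then obtain b where "p = w @ b" by (auto simp: prefix_def)
    then have "2 \<le> occ w e"
      by (intro two_le_occ[of e "[]" w c d b]) (use c d \<open>d \<noteq> []\<close> in auto)
    with assms(3) show ?thesis by simp
  next
    case False
    then have "suffix p (rev w)" using suffix_length_suffix[OF p(2) assms(2)] by simp
    then have "prefix p w" using p(1) by (metis palindrome_def rev_rev_ident suffix_to_prefix)
    then obtain b where "w = p @ b" by (auto simp: prefix_def)
    then have "2 \<le> occ p e"
      by (intro two_le_occ[of e "[]" p "b @ c" d "[]"]) (use c d \<open>d \<noteq> []\<close> in auto)
    with p(3) show ?thesis by simp
  qed
qed

lemma palindrome_if_return_word_of_palindrome:
  assumes "palindrome v" "prefix v q" "suffix v q" "occ v q = 2" "occ (lps q) q = 1"
  shows "palindrome q"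
proof (cases "lps q = q")
  case True
  then show ?thesis using palindrome_lps by metis
next
  case False
  define p where "p = lps q"
  have p: "palindrome p" "suffix p q" "occ p q = 1"
    using palindrome_lps suffix_lps assms(5) unfolding p_def by auto
  obtain d where d: "q = d @ p" using p(2) by (auto simp: suffix_def)
  with False have "d \<noteq> []" unfolding p_def by auto
  obtain c where c: "q = v @ c" using assms(2) by (auto simp: prefix_def)
  obtain g where g: "q = g @ v" using assms(3) by (auto simp: suffix_def)
  have "g \<noteq> []" using g assms(4) by auto
  have "suffix v p"
    using suffix_length_suffix[OF assms(3) p(2)] length_le_lps[OF assms(3,1)]
    unfolding p_def by simp
  then have "prefix v p" using palindrome_suffix_imp_prefix_rev[OF p(1)] assms(1)
    by (metis palindrome_def)
  then obtain b where b: "p = v @ b" by (auto simp: prefix_def)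
  have "p \<noteq> v" using p(3) assms(4) by auto
  then have "length d \<noteq> length g"
    using b d g by (auto dest: arg_cong[of _ _ length])
  \<comment> \<open>\<open>v\<close> occurs at the start of \<open>q\<close>, at the start of \<open>p\<close> and at the end of \<open>q\<close>\<close>
  have "3 \<le> occ v q"
    by (rule three_le_occ[of q "[]" v c d b g "[]"])
      (use b c d g \<open>d \<noteq> []\<close> \<open>g \<noteq> []\<close> \<open>length d \<noteq> length g\<close> in auto)
  with assms(4) show ?thesis by simp
qed

theorem lemma4p4:
  fixes u :: "nat \<Rightarrow> 'a" and H :: nat and w v :: "'a list"
  assumes closed: "closed_under_reversal u"
    and H: "\<forall>f. factor_of u f \<and> length f \<ge> H \<longrightarrow> occ (lps f) f = 1"
    and w: "factor_of u w" "\<not> palindrome w" "length w \<ge> H"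
    and v: "factor_of u v" "palindrome v" "length v \<ge> H"
  shows "(\<forall>q. complete_return_word u w q \<longrightarrow> sublist (rev w) q)
    \<and> (\<forall>e. factor_of u e \<and> prefix w e \<and> suffix (rev w) e
            \<and> occ w e = 1 \<and> occ (rev w) e = 1 \<longrightarrow> palindrome e)
    \<and> (\<forall>q. complete_return_word u v q \<longrightarrow> palindrome q)"
proof -
  have lps_unique: "occ (lps f) f = 1" if "factor_of u f" "prefix x f" "H \<le> length x" for f x
    using H that prefix_length_le by fastforce
  show ?thesis
  proof (intro conjI allI impI)
    fix q assume "complete_return_word u w q"
    then show "sublist (rev w) q"
      using sublist_rev_if_return_word lps_unique w(3) by (auto simp: complete_return_word_def)
  next
    fix e assume "factor_of u e \<and> prefix w e \<and> suffix (rev w) e \<and> occ w e = 1 \<and> occ (rev w) e = 1"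
    then show "palindrome e"
      using palindrome_if_bordered_by_reversal lps_unique w(3) by blast
  next
    fix q assume "complete_return_word u v q"
    then show "palindrome q"
      using palindrome_if_return_word_of_palindrome[OF v(2)] lps_unique v(3)
      by (auto simp: complete_return_word_def)
  qed
qed

end
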